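(* Let $\varphi\colon G\to G$ be an endomorphism of a torsion abelian group $G$ and $H\leq G$ a subgroup with $\varphi H\subseteq H$. If the restriction $\varphi|_H\colon H\to H$ and the induced endomorphism $\widetilde\varphi\colon G/H\to G/H$, $\widetilde\varphi(g+H)=\varphi g+H$, are positively expansive, then $\varphi$ is positively expansive. Analogously, if $\varphi$ is an automorphism such that $\varphi|_H$ is an automorphism of $H$, and $\varphi|_H$ and the induced automorphism $\widetilde\varphi$ of $G/H$ are expansive, then $\varphi$ is expansive.
   Context: $\mathbb N=\{0,1,2,\dots\}$. An endomorphism $\varphi$ of an abelian group $G$ is positively expansive if there is a finite subgroup $S\leq G$ such that for every finite subgroup $F\leq G$ there is $n\in\mathbb N$ with $F\subseteq\sum_{k=0}^n\varphi^kS$. An automorphism $\varphi$ is expansive if there is a finite subgroup $S\leq G$ such that for every finite subgroup $F\leq G$ there is $n\in\mathbb N$ with $F\subseteq\sum_{|k|\leq n}\varphi^kS$. *)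

theory Defs
  imports "HOL-Algebra.Algebra"
begin

text \<open>Groups are HOL-Algebra (commutative) groups written multiplicatively; the
  paper's sum of subsets A + B corresponds to the set product A <#> B.\<close>

definition torsion_group :: "('a, 'b) monoid_scheme \<Rightarrow> bool" where
  "torsion_group G \<longleftrightarrow> (\<forall>g\<in>carrier G. \<exists>n::nat. n > 0 \<and> g [^]\<^bsub>G\<^esub> n = \<one>\<^bsub>G\<^esub>)"

fun set_sum_list :: "('a, 'b) monoid_scheme \<Rightarrow> 'a set list \<Rightarrow> 'a set" where
  "set_sum_list G [] = {\<one>\<^bsub>G\<^esub>}"
| "set_sum_list G (A # As) = A <#>\<^bsub>G\<^esub> set_sum_list G As"

text \<open>Integer powers of a map on the carrier; negative powers use the inverse map
  (meaningful when the map is an automorphism).\<close>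
definition int_iter :: "('a, 'b) monoid_scheme \<Rightarrow> ('a \<Rightarrow> 'a) \<Rightarrow> int \<Rightarrow> 'a \<Rightarrow> 'a" where
  "int_iter G f k = (if 0 \<le> k then f ^^ nat k else (inv_into (carrier G) f) ^^ nat (- k))"

definition pos_expansive :: "('a, 'b) monoid_scheme \<Rightarrow> ('a \<Rightarrow> 'a) \<Rightarrow> bool" where
  "pos_expansive G f \<longleftrightarrow>
     (\<exists>S. subgroup S G \<and> finite S \<and>
        (\<forall>F. subgroup F G \<and> finite F \<longrightarrow>
           (\<exists>n::nat. F \<subseteq> set_sum_list G (map (\<lambda>k. (f ^^ k) ` S) [0..<Suc n]))))"

definition expansive :: "('a, 'b) monoid_scheme \<Rightarrow> ('a \<Rightarrow> 'a) \<Rightarrow> bool" where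
  "expansive G f \<longleftrightarrow>
     (\<exists>S. subgroup S G \<and> finite S \<and>
        (\<forall>F. subgroup F G \<and> finite F \<longrightarrow>
           (\<exists>n::nat. F \<subseteq> set_sum_list G (map (\<lambda>k. int_iter G f k ` S) [- int n..int n]))))"

end

theory Submission
  imports Defs
begin

text \<open>In an abelian group the finite sum of the subgroups \<open>\<phi>\<^sup>k S\<close> is the subgroup they
  generate, and in a torsion abelian group finitely generated subgroups are finite. Let \<open>S\<^sub>H \<le> H\<close> and
  \<open>S\<^sub>Q \<le> G/H\<close> witness expansiveness of \<open>\<phi>|\<^sub>H\<close> and \<open>\<psi>\<close>, lift \<open>S\<^sub>Q\<close> to a finite set \<open>T\<close> of
  representatives, and put \<open>S = \<langle>S\<^sub>H \<union> T\<rangle>\<close>. Given a finite \<open>F \<le> G\<close>, its image in \<open>G/H\<close> lies in the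
  span of finitely many \<open>\<psi>\<^sup>k S\<^sub>Q\<close>, which is the image of the finite subgroup \<open>W\<close> spanned by the
  corresponding \<open>\<phi>\<^sup>k T\<close>. Hence \<open>F \<subseteq> (H \<inter> (F + W)) + W\<close>, and the finite subgroup
  \<open>H \<inter> (F + W)\<close> of \<open>H\<close> is spanned by finitely many \<open>\<phi>\<^sup>k S\<^sub>H\<close>. The same argument serves both
  statements: only the window of exponents (\<open>0..n\<close> or \<open>-n..n\<close>) differs.\<close>

section \<open>Sums of subgroups\<close>

lemma set_multI: "a \<in> A \<Longrightarrow> b \<in> B \<Longrightarrow> a \<otimes>\<^bsub>G\<^esub> b \<in> A <#>\<^bsub>G\<^esub> B"
  unfolding set_mult_def by blast

lemma set_multE:
  assumes "x \<in> A <#>\<^bsub>G\<^esub> B"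
  obtains a b where "a \<in> A" "b \<in> B" "x = a \<otimes>\<^bsub>G\<^esub> b"
  using assms unfolding set_mult_def by blast

lemma finite_set_mult:
  assumes "finite A" "finite B"
  shows "finite (A <#>\<^bsub>G\<^esub> B)"
proof -
  have "A <#>\<^bsub>G\<^esub> B = (\<lambda>(a, b). a \<otimes>\<^bsub>G\<^esub> b) ` (A \<times> B)"
    unfolding set_mult_def by force
  then show ?thesis
    using assms by simp
qed

lemma set_sum_list_update_carrier [simp]:
  "set_sum_list (G\<lparr>carrier := H\<rparr>) As = set_sum_list G As"
  by (induction As) (simp_all add: set_mult_def)

lemma (in group) subgroup_update_carrier_iff:
  assumes H: "subgroup H G"
  shows "subgroup S (G\<lparr>carrier := H\<rparr>) \<longleftrightarrow> subgroup S G \<and> S \<subseteq> H"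
proof
  assume S: "subgroup S (G\<lparr>carrier := H\<rparr>)"
  show "subgroup S G \<and> S \<subseteq> H"
    using incl_subgroup[OF H S] subgroup.subset[OF S] by simp
next
  assume "subgroup S G \<and> S \<subseteq> H"
  then show "subgroup S (G\<lparr>carrier := H\<rparr>)"
    using subgroup_incl[OF _ H] by blast
qed

lemma (in group) subset_set_mult_inter_if_rcosets_subset:
  assumes H: "subgroup H G" and W: "subgroup W G" and F: "F \<subseteq> carrier G"
    and FW: "(\<lambda>x. H #> x) ` F \<subseteq> (\<lambda>x. H #> x) ` W"
  shows "F \<subseteq> (H \<inter> (F <#> W)) <#> W"
proof
  fix x assume x: "x \<in> F"
  then obtain w where w: "w \<in> W" "H #> x = H #> w"
    using FW by blast
  have xG: "x \<in> carrier G" and wG: "w \<in> carrier G"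
    using x F w(1) subgroup.mem_carrier[OF W] by auto
  have "x \<in> H #> w"
    using w(2) rcos_self[OF _ H] x F by blast
  then have "x \<otimes> inv w \<in> H"
    using subgroup.rcos_module_imp[OF H is_group wG] by blast
  moreover have "x \<otimes> inv w \<in> F <#> W"
    using set_multI[OF x subgroup.m_inv_closed[OF W w(1)]] .
  moreover have "x = (x \<otimes> inv w) \<otimes> w"
    using xG wG by (simp add: m_assoc)
  ultimately show "x \<in> (H \<inter> (F <#> W)) <#> W"
    using set_multI[OF _ w(1)] by (metis IntI)
qed

lemma (in comm_group) set_mult_generate:
  assumes A: "subgroup A G" and U: "U \<subseteq> carrier G"
  shows "A <#> generate G U = generate G (A \<union> U)"
proof
  show "A <#> generate G U \<subseteq> generate G (A \<union> U)"
  proof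
    fix x assume "x \<in> A <#> generate G U"
    then obtain a b where ab: "a \<in> A" "b \<in> generate G U" and x: "x = a \<otimes> b"
      by (rule set_multE)
    have "a \<in> generate G (A \<union> U)"
      using ab(1) by (intro generate.incl) simp
    moreover have "b \<in> generate G (A \<union> U)"
      using ab(2) mono_generate[of U "A \<union> U"] by blast
    ultimately show "x \<in> generate G (A \<union> U)"
      unfolding x by (rule generate.eng)
  qed
  have "A \<union> U \<subseteq> A <#> generate G U"
  proof
    fix x assume x: "x \<in> A \<union> U"
    then have "x \<in> carrier G"
      using U subgroup.mem_carrier[OF A] by blast
    moreover have "x \<otimes> \<one> \<in> A <#> generate G U" if "x \<in> A"
      using set_multI[OF that generate.one] .
    moreover have "\<one> \<otimes> x \<in> A <#> generate G U" if "x \<in> U"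
      using set_multI[OF subgroup.one_closed[OF A] generate.incl[OF that]] .
    ultimately show "x \<in> A <#> generate G U"
      using x by auto
  qed
  then show "generate G (A \<union> U) \<subseteq> A <#> generate G U"
    using generate_subgroup_incl mult_subgroups[OF A generate_is_subgroup[OF U]] by blast
qed

lemma (in comm_group) set_sum_list_eq_generate:
  "\<forall>A\<in>set As. subgroup A G \<Longrightarrow> set_sum_list G As = generate G (\<Union>(set As))"
proof (induction As)
  case Nil
  show ?case by (simp add: generate_empty)
next
  case (Cons A As)
  then have "\<Union>(set As) \<subseteq> carrier G"
    using subgroup.subset by auto
  with Cons show ?case
    by (simp add: set_mult_generate)
qed

lemma (in comm_group) set_sum_list_images_eq_generate:
  assumes f: "\<And>k. f k \<in> hom G G" and S: "subgroup S G"
  shows "set_sum_list G (map (\<lambda>k. f k ` S) ks) = generate G (\<Union>k\<in>set ks. f k ` S)"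
proof -
  have "group_hom G G (f k)" for k
    using f by (simp add: group_hom_def group_hom_axioms_def)
  then have "subgroup (f k ` S) G" for k
    using group_hom.subgroup_img_is_subgroup[OF _ S] by blast
  then show ?thesis
    using set_sum_list_eq_generate[of "map (\<lambda>k. f k ` S) ks"] by simp
qed

lemma (in comm_group) finite_generate_torsion:
  assumes tor: "torsion_group G" and "finite U" "U \<subseteq> carrier G"
  shows "finite (generate G U)"
  using assms(2,3)
proof (induction U rule: finite_induct)
  case empty
  show ?case by (simp add: generate_empty)
next
  case (insert x U)
  then have x: "x \<in> carrier G" and U: "U \<subseteq> carrier G" by auto
  obtain n :: nat where "n > 0" "x [^] n = \<one>"
    using tor x unfolding torsion_group_def by blast
  then have "finite (carrier (subgroup_generated G {x}))"
    using finite_cyclic_subgroup[OF x] by auto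
  then have "finite (generate G {x})"
    using x by (simp add: carrier_subgroup_generated)
  moreover have "generate G (insert x U) \<subseteq> generate G {x} <#> generate G U"
  proof -
    have "insert x U \<subseteq> generate G {x} \<union> U"
      using generate.incl[of x "{x}" G] by blast
    then show ?thesis
      using mono_generate set_mult_generate[OF generate_is_subgroup U] x by auto
  qed
  ultimately show ?case
    using finite_set_mult[of "generate G {x}" "generate G U" G] insert.IH U finite_subset by auto
qed

section \<open>Iterates and integer iterates\<close>

lemma hom_funpow: "f \<in> hom G G \<Longrightarrow> f ^^ n \<in> hom G G"
  by (induction n) (auto simp: hom_def Pi_def)

lemma funpow_semiconj:
  assumes f: "\<And>x. x \<in> A \<Longrightarrow> f x \<in> A" and comm: "\<And>x. x \<in> A \<Longrightarrow> g (p x) = p (f x)"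
    and x: "x \<in> A"
  shows "(g ^^ n) (p x) = p ((f ^^ n) x)"
proof -
  have "(f ^^ n) x \<in> A \<and> (g ^^ n) (p x) = p ((f ^^ n) x)"
    by (induction n) (simp_all add: x f comm)
  then show ?thesis ..
qed

lemma inv_into_semiconj:
  assumes f: "bij_betw f A A" and g: "inj_on g B" and p: "p ` A \<subseteq> B"
    and comm: "\<And>x. x \<in> A \<Longrightarrow> g (p x) = p (f x)" and y: "y \<in> A"
  shows "inv_into B g (p y) = p (inv_into A f y)"
proof (rule inv_into_f_eq[OF g])
  have y_img: "y \<in> f ` A"
    using f y by (simp add: bij_betw_def)
  then have "inv_into A f y \<in> A"
    by (rule inv_into_into)
  then show "p (inv_into A f y) \<in> B"
    using p by blast
  show "g (p (inv_into A f y)) = p y"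
    using comm[OF \<open>inv_into A f y \<in> A\<close>] f_inv_into_f[OF y_img] by simp
qed

lemma int_iter_semiconj:
  assumes f: "bij_betw f (carrier G) (carrier G)" and g: "bij_betw g (carrier Q) (carrier Q)"
    and p: "p ` carrier G \<subseteq> carrier Q" and comm: "\<And>x. x \<in> carrier G \<Longrightarrow> g (p x) = p (f x)"
    and x: "x \<in> carrier G"
  shows "int_iter Q g k (p x) = p (int_iter G f k x)"
proof (cases "0 \<le> k")
  case True
  have f_closed: "f y \<in> carrier G" if "y \<in> carrier G" for y
    using bij_betwE[OF f] that by blast
  show ?thesis
    using True funpow_semiconj[of "carrier G" f g p, OF f_closed comm x] by (simp add: int_iter_def)
next
  case False
  have inv_closed: "inv_into (carrier G) f y \<in> carrier G" if "y \<in> carrier G" for y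
    using bij_betwE[OF bij_betw_inv_into[OF f]] that by blast
  have inv_comm: "inv_into (carrier Q) g (p y) = p (inv_into (carrier G) f y)" if "y \<in> carrier G" for y
    using inv_into_semiconj[OF f bij_betw_imp_inj_on[OF g] p comm that] .
  show ?thesis
    using False funpow_semiconj[of "carrier G" "inv_into (carrier G) f" "inv_into (carrier Q) g" p,
      OF inv_closed inv_comm x] by (simp add: int_iter_def)
qed

lemma (in group) int_iter_hom:
  assumes "f \<in> iso G G"
  shows "int_iter G f k \<in> hom G G"
proof -
  have "f \<in> hom G G" "inv_into (carrier G) f \<in> hom G G"
    using assms iso_set_sym[OF assms] by (simp_all add: iso_def)
  then show ?thesis
    by (simp add: int_iter_def hom_funpow)
qed

lemma (in group) int_iter_update_carrier:
  assumes H: "subgroup H G" and f: "f \<in> iso G G" "bij_betw f H H" and x: "x \<in> H"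
  shows "int_iter (G\<lparr>carrier := H\<rparr>) f k x = int_iter G f k x"
  using int_iter_semiconj[where G = "G\<lparr>carrier := H\<rparr>" and Q = G and p = "\<lambda>x. x"] assms
    subgroup.subset[OF H]
  by (auto simp: iso_def)

section \<open>Maps induced on the quotient\<close>

lemma (in normal) group_hom_r_coset: "group_hom G (G Mod H) (\<lambda>x. H #> x)"
  using r_coset_hom_Mod by (simp add: group_hom_def group_hom_axioms_def factorgroup_is_group)

lemma (in normal) induced_hom_FactGroup:
  assumes f: "f \<in> hom G G" and g: "\<And>x. x \<in> carrier G \<Longrightarrow> g (H #> x) = H #> f x"
  shows "g \<in> hom (G Mod H) (G Mod H)"
proof (rule homI)
  show "g C \<in> carrier (G Mod H)" if "C \<in> carrier (G Mod H)" for C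
    using that g hom_in_carrier[OF f] unfolding carrier_FactGroup by auto
  fix C D assume "C \<in> carrier (G Mod H)" "D \<in> carrier (G Mod H)"
  then obtain a b where a: "a \<in> carrier G" "C = H #> a" and b: "b \<in> carrier G" "D = H #> b"
    unfolding carrier_FactGroup by blast
  then show "g (C \<otimes>\<^bsub>G Mod H\<^esub> D) = g C \<otimes>\<^bsub>G Mod H\<^esub> g D"
    using g hom_in_carrier[OF f] by (simp add: rcos_sum hom_mult[OF f])
qed

lemma (in normal) induced_iso_FactGroup:
  assumes f: "f \<in> iso G G" and fH: "f ` H = H"
    and g: "\<And>x. x \<in> carrier G \<Longrightarrow> g (H #> x) = H #> f x"
  shows "g \<in> iso (G Mod H) (G Mod H)"
proof -
  have f_hom: "f \<in> hom G G" and f_bij: "bij_betw f (carrier G) (carrier G)"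
    using f by (simp_all add: iso_def)
  interpret Q: group "G Mod H"
    by (rule factorgroup_is_group)
  interpret g: group_hom "G Mod H" "G Mod H" g
    using induced_hom_FactGroup[OF f_hom g]
    by (simp add: group_hom_def group_hom_axioms_def)
  show ?thesis
    unfolding g.iso_iff
  proof (intro conjI ballI impI subsetI)
    fix C assume "C \<in> carrier (G Mod H)"
    then obtain y where y: "y \<in> carrier G" "C = H #> y"
      unfolding carrier_FactGroup by blast
    then obtain x where x: "x \<in> carrier G" "y = f x"
      using bij_betw_imp_surj_on[OF f_bij] by blast
    then have "C = g (H #> x)"
      unfolding y(2) g[OF x(1)] by simp
    moreover have "H #> x \<in> carrier (G Mod H)"
      using x(1) unfolding carrier_FactGroup by blast
    ultimately show "C \<in> g ` carrier (G Mod H)"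
      by blast
  next
    fix C assume "C \<in> carrier (G Mod H)" and C_one: "g C = \<one>\<^bsub>G Mod H\<^esub>"
    then obtain a where a: "a \<in> carrier G" "C = H #> a"
      unfolding carrier_FactGroup by blast
    then have "H #> f a = H"
      using C_one unfolding a(2) g[OF a(1)] by simp
    then have "f a \<in> H"
      using rcos_self[OF hom_in_carrier[OF f_hom a(1)] subgroup_axioms] by simp
    then obtain h where h: "h \<in> H" "f a = f h"
      using fH by blast
    then have "a = h"
      using bij_betw_imp_inj_on[OF f_bij] a(1) subset by (auto dest: inj_onD)
    then show "C = \<one>\<^bsub>G Mod H\<^esub>"
      using a h coset_join2[OF _ subgroup_axioms] by simp
  qed
qed

lemma (in normal) rcosets_generate_orbits:
  assumes f: "\<And>k. f k \<in> hom G G" and g: "\<And>k x. x \<in> carrier G \<Longrightarrow> g k (H #> x) = H #> f k x"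
    and T: "T \<subseteq> carrier G"
  shows "generate (G Mod H) (\<Union>k\<in>I. g k ` (\<lambda>x. H #> x) ` T)
    = (\<lambda>x. H #> x) ` generate G (\<Union>k\<in>I. f k ` T)"
proof -
  have "(\<Union>k\<in>I. g k ` (\<lambda>x. H #> x) ` T) = (\<lambda>x. H #> x) ` (\<Union>k\<in>I. f k ` T)"
    unfolding image_UN image_image using g T by (auto intro!: SUP_cong image_cong)
  moreover have "(\<Union>k\<in>I. f k ` T) \<subseteq> carrier G"
    using hom_in_carrier[OF f] T by blast
  ultimately show ?thesis
    using group_hom.generate_img[OF group_hom_r_coset] by simp
qed

section \<open>Expansiveness with respect to a window of iterates\<close>

text \<open>\<open>f k\<close> is the \<open>k\<close>-th iterate and \<open>J n\<close> the window of exponents after \<open>n\<close> steps; sums of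
  subgroups are replaced by generated subgroups, and both \<open>S\<close> and \<open>F\<close> range over subgroups of \<open>H\<close>.\<close>

definition expansive_on :: "('a, 'b) monoid_scheme \<Rightarrow> 'a set \<Rightarrow> ('i \<Rightarrow> 'a \<Rightarrow> 'a) \<Rightarrow> (nat \<Rightarrow> 'i set) \<Rightarrow> bool"
  where "expansive_on G H f J \<longleftrightarrow>
    (\<exists>S. subgroup S G \<and> S \<subseteq> H \<and> finite S \<and>
       (\<forall>F. subgroup F G \<and> F \<subseteq> H \<and> finite F \<longrightarrow> (\<exists>n. F \<subseteq> generate G (\<Union>k\<in>J n. f k ` S))))"

lemma (in comm_group) pos_expansive_subgroup_iff:
  assumes H: "subgroup H G" and f: "f \<in> hom G G"
  shows "pos_expansive (G\<lparr>carrier := H\<rparr>) f \<longleftrightarrow> expansive_on G H (\<lambda>k. f ^^ k) (\<lambda>n. {..n})"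
proof -
  have "set_sum_list (G\<lparr>carrier := H\<rparr>) (map (\<lambda>k. (f ^^ k) ` S) [0..<Suc n])
      = generate G (\<Union>k\<in>{..n}. (f ^^ k) ` S)" if "subgroup S G" for S n
    using set_sum_list_images_eq_generate[where f = "\<lambda>k. f ^^ k" and ks = "[0..<Suc n]",
        OF hom_funpow[OF f] that]
    by (simp add: atLeast0LessThan lessThan_Suc_atMost del: upt_Suc)
  then show ?thesis
    unfolding pos_expansive_def expansive_on_def subgroup_update_carrier_iff[OF H]
    by (intro ex_cong1) auto
qed

lemma (in comm_group) pos_expansive_iff:
  "f \<in> hom G G \<Longrightarrow> pos_expansive G f \<longleftrightarrow> expansive_on G (carrier G) (\<lambda>k. f ^^ k) (\<lambda>n. {..n})"
  using pos_expansive_subgroup_iff[OF subgroup_self] by simp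

lemma (in comm_group) expansive_subgroup_iff:
  assumes H: "subgroup H G" and f: "f \<in> iso G G" "bij_betw f H H"
  shows "expansive (G\<lparr>carrier := H\<rparr>) f \<longleftrightarrow> expansive_on G H (int_iter G f) (\<lambda>n. {- int n..int n})"
proof -
  have "set_sum_list (G\<lparr>carrier := H\<rparr>) (map (\<lambda>k. int_iter (G\<lparr>carrier := H\<rparr>) f k ` S) [- int n..int n])
      = generate G (\<Union>k\<in>{- int n..int n}. int_iter G f k ` S)" if "subgroup S G" "S \<subseteq> H" for S n
  proof -
    have "int_iter (G\<lparr>carrier := H\<rparr>) f k ` S = int_iter G f k ` S" for k
      using int_iter_update_carrier[OF H f] that(2) by (intro image_cong) auto
    then show ?thesis
      using set_sum_list_images_eq_generate[where f = "int_iter G f", OF int_iter_hom[OF f(1)] that(1)]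
      by simp
  qed
  then show ?thesis
    unfolding expansive_def expansive_on_def subgroup_update_carrier_iff[OF H]
    by (intro ex_cong1) auto
qed

lemma (in comm_group) expansive_iff:
  "f \<in> iso G G \<Longrightarrow> expansive G f \<longleftrightarrow> expansive_on G (carrier G) (int_iter G f) (\<lambda>n. {- int n..int n})"
  using expansive_subgroup_iff[OF subgroup_self] by (simp add: iso_def)

lemma (in comm_group) finite_subgroup_subset_generate_orbits:
  fixes J :: "nat \<Rightarrow> 'i set"
  assumes tor: "torsion_group G" and H: "subgroup H G"
    and f: "\<And>k. f k \<in> hom G G" and g: "\<And>k x. x \<in> carrier G \<Longrightarrow> g k (H #> x) = H #> f k x"
    and J: "mono J" "\<And>n. finite (J n)"
    and SH_gen: "\<And>K. subgroup K G \<Longrightarrow> K \<subseteq> H \<Longrightarrow> finite K \<Longrightarrow> \<exists>n. K \<subseteq> generate G (\<Union>k\<in>J n. f k ` SH)"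
    and T: "T \<subseteq> carrier G" "finite T"
    and T_gen: "\<And>Q. subgroup Q (G Mod H) \<Longrightarrow> finite Q \<Longrightarrow>
      \<exists>n. Q \<subseteq> generate (G Mod H) (\<Union>k\<in>J n. g k ` (\<lambda>x. H #> x) ` T)"
    and S: "subgroup S G" "SH \<union> T \<subseteq> S"
    and F: "subgroup F G" "finite F"
  shows "\<exists>n. F \<subseteq> generate G (\<Union>k\<in>J n. f k ` S)"
proof -
  interpret N: normal H G
    using H by (rule subgroup_imp_normal)
  have "subgroup ((\<lambda>x. H #> x) ` F) (G Mod H)"
    using group_hom.subgroup_img_is_subgroup[OF N.group_hom_r_coset F(1)] .
  then obtain n1 where "(\<lambda>x. H #> x) ` F \<subseteq> generate (G Mod H) (\<Union>k\<in>J n1. g k ` (\<lambda>x. H #> x) ` T)"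
    using T_gen F(2) by blast
  then have "(\<lambda>x. H #> x) ` F \<subseteq> (\<lambda>x. H #> x) ` generate G (\<Union>k\<in>J n1. f k ` T)"
    using N.rcosets_generate_orbits[where f = f and g = g, OF f g T(1)] by simp
  moreover define W where "W = generate G (\<Union>k\<in>J n1. f k ` T)"
  moreover have Y: "(\<Union>k\<in>J n1. f k ` T) \<subseteq> carrier G"
    using hom_in_carrier[OF f] T(1) by blast
  ultimately have FKW: "F \<subseteq> (H \<inter> (F <#> W)) <#> W" and W: "subgroup W G" "finite W"
    using subset_set_mult_inter_if_rcosets_subset[OF H _ subgroup.subset[OF F(1)]]
      generate_is_subgroup[OF Y] finite_generate_torsion[OF tor _ Y] J(2) T(2) by auto
  have "subgroup (H \<inter> (F <#> W)) G" "finite (H \<inter> (F <#> W))"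
    using subgroups_Inter_pair[OF H mult_subgroups[OF F(1) W(1)]] finite_set_mult[OF F(2) W(2)]
    by auto
  then obtain n2 where n2: "H \<inter> (F <#> W) \<subseteq> generate G (\<Union>k\<in>J n2. f k ` SH)"
    using SH_gen by blast
  define Z where "Z = generate G (\<Union>k\<in>J (max n1 n2). f k ` S)"
  have Z: "subgroup Z G"
    unfolding Z_def using hom_in_carrier[OF f] subgroup.subset[OF S(1)]
    by (intro generate_is_subgroup) blast
  have J_max: "J n1 \<subseteq> J (max n1 n2)" "J n2 \<subseteq> J (max n1 n2)"
    using J(1) by (simp_all add: monoD)
  have "H \<inter> (F <#> W) \<subseteq> Z"
    using n2 mono_generate J_max S(2) unfolding Z_def by (meson UN_mono image_mono le_supE order_trans)
  moreover have "W \<subseteq> Z"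
    unfolding W_def Z_def using mono_generate J_max S(2) by (meson UN_mono image_mono le_supE)
  ultimately have "(H \<inter> (F <#> W)) <#> W \<subseteq> Z"
    using mono_set_mult subgroup_mult_id[OF Z] by metis
  then show ?thesis
    using FKW unfolding Z_def by blast
qed

lemma (in comm_group) expansive_on_extension:
  assumes tor: "torsion_group G" and H: "subgroup H G"
    and f: "\<And>k. f k \<in> hom G G" and g: "\<And>k x. x \<in> carrier G \<Longrightarrow> g k (H #> x) = H #> f k x"
    and J: "mono J" "\<And>n. finite (J n)"
    and exp_H: "expansive_on G H f J"
    and exp_Q: "expansive_on (G Mod H) (carrier (G Mod H)) g J"
  shows "expansive_on G (carrier G) f J"
proof -
  obtain SH where SH: "subgroup SH G" "SH \<subseteq> H" "finite SH"
    and SH_gen: "\<And>K. subgroup K G \<Longrightarrow> K \<subseteq> H \<Longrightarrow> finite K \<Longrightarrow> \<exists>n. K \<subseteq> generate G (\<Union>k\<in>J n. f k ` SH)"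
    using exp_H unfolding expansive_on_def by blast
  obtain SQ where SQ: "subgroup SQ (G Mod H)" "finite SQ"
    and SQ_gen: "\<And>Q. subgroup Q (G Mod H) \<Longrightarrow> finite Q \<Longrightarrow>
      \<exists>n. Q \<subseteq> generate (G Mod H) (\<Union>k\<in>J n. g k ` SQ)"
    using exp_Q subgroup.subset unfolding expansive_on_def by meson
  obtain T where T: "T \<subseteq> carrier G" "finite T" and SQ_T: "SQ = (\<lambda>x. H #> x) ` T"
    using finite_subset_image[OF SQ(2)] subgroup.subset[OF SQ(1)]
    unfolding carrier_FactGroup by metis
  have SH_T: "SH \<union> T \<subseteq> carrier G"
    using SH(1) subgroup.subset T(1) by blast
  define S where "S = generate G (SH \<union> T)"
  have S: "subgroup S G" "finite S" "SH \<union> T \<subseteq> S"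
    unfolding S_def using generate_is_subgroup[OF SH_T] finite_generate_torsion[OF tor _ SH_T]
      SH(3) T(2) by (auto intro: generate.incl)
  show ?thesis
    unfolding expansive_on_def
    using finite_subgroup_subset_generate_orbits[OF tor H f g J SH_gen T SQ_gen[unfolded SQ_T] S(1,3)]
      S(1,2) subgroup.subset[OF S(1)] by blast
qed

lemma (in comm_group) pos_expansive_extension:
  assumes tor: "torsion_group G" and H: "subgroup H G" and f: "f \<in> hom G G"
    and g: "\<And>x. x \<in> carrier G \<Longrightarrow> g (H #> x) = H #> f x"
    and exp_H: "pos_expansive (G\<lparr>carrier := H\<rparr>) f" and exp_Q: "pos_expansive (G Mod H) g"
  shows "pos_expansive G f"
proof -
  interpret N: normal H G
    using H by (rule subgroup_imp_normal)
  have Q: "comm_group (G Mod H)"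
    using H by (rule abelian_FactGroup)
  have iter_g: "(g ^^ k) (H #> x) = H #> (f ^^ k) x" if "x \<in> carrier G" for k x
    using funpow_semiconj[of "carrier G" f g] hom_in_carrier[OF f] g that by blast
  have "expansive_on G (carrier G) (\<lambda>k. f ^^ k) (\<lambda>n. {..n})"
  proof (rule expansive_on_extension[OF tor H hom_funpow[OF f] iter_g])
    show "mono (\<lambda>n. {..n::nat})" "\<And>n. finite {..n::nat}"
      by (simp_all add: mono_def)
    show "expansive_on G H (\<lambda>k. f ^^ k) (\<lambda>n. {..n})"
      using exp_H pos_expansive_subgroup_iff[OF H f] by simp
    show "expansive_on (G Mod H) (carrier (G Mod H)) (\<lambda>k. g ^^ k) (\<lambda>n. {..n})"
      using exp_Q comm_group.pos_expansive_iff[OF Q N.induced_hom_FactGroup[OF f g]] by simp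
  qed
  then show ?thesis
    using pos_expansive_iff[OF f] by simp
qed

lemma (in comm_group) expansive_extension:
  assumes tor: "torsion_group G" and H: "subgroup H G" and f: "f \<in> iso G G" "bij_betw f H H"
    and g: "\<And>x. x \<in> carrier G \<Longrightarrow> g (H #> x) = H #> f x"
    and exp_H: "expansive (G\<lparr>carrier := H\<rparr>) f" and exp_Q: "expansive (G Mod H) g"
  shows "expansive G f"
proof -
  interpret N: normal H G
    using H by (rule subgroup_imp_normal)
  have Q: "comm_group (G Mod H)"
    using H by (rule abelian_FactGroup)
  have g_iso: "g \<in> iso (G Mod H) (G Mod H)"
    using N.induced_iso_FactGroup[OF f(1) _ g] f(2) by (simp add: bij_betw_def)
  have f_bij: "bij_betw f (carrier G) (carrier G)"
    using f(1) by (simp add: iso_def)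
  have g_bij: "bij_betw g (carrier (G Mod H)) (carrier (G Mod H))"
    using g_iso by (simp add: iso_def)
  have coset_carrier: "(\<lambda>x. H #> x) ` carrier G \<subseteq> carrier (G Mod H)"
    by (simp add: carrier_FactGroup)
  have iter_g: "int_iter (G Mod H) g k (H #> x) = H #> int_iter G f k x" if "x \<in> carrier G" for k x
    using int_iter_semiconj[OF f_bij g_bij coset_carrier g that] .
  have "expansive_on G (carrier G) (int_iter G f) (\<lambda>n. {- int n..int n})"
  proof (rule expansive_on_extension[OF tor H int_iter_hom[OF f(1)] iter_g])
    show "mono (\<lambda>n. {- int n..int n})" "\<And>n. finite {- int n..int n}"
      by (auto simp: mono_def)
    show "expansive_on G H (int_iter G f) (\<lambda>n. {- int n..int n})"
      using exp_H expansive_subgroup_iff[OF H f] by simp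
    show "expansive_on (G Mod H) (carrier (G Mod H)) (int_iter (G Mod H) g) (\<lambda>n. {- int n..int n})"
      using exp_Q comm_group.expansive_iff[OF Q g_iso] by simp
  qed
  then show ?thesis
    using expansive_iff[OF f(1)] by simp
qed

theorem proposition2p9:
  fixes G (structure) and \<phi> :: "'a \<Rightarrow> 'a" and H :: "'a set" and \<psi> :: "'a set \<Rightarrow> 'a set"
  assumes "comm_group G" and "torsion_group G"
    and "subgroup H G" and "\<phi> \<in> hom G G" and "\<phi> ` H \<subseteq> H"
    and "\<forall>g\<in>carrier G. \<psi> (H #> g) = H #> \<phi> g"
  shows "(pos_expansive (G\<lparr>carrier := H\<rparr>) \<phi> \<and> pos_expansive (G Mod H) \<psi>
            \<longrightarrow> pos_expansive G \<phi>)
       \<and> (\<phi> \<in> iso G G \<and> \<phi> \<in> iso (G\<lparr>carrier := H\<rparr>) (G\<lparr>carrier := H\<rparr>)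
            \<and> expansive (G\<lparr>carrier := H\<rparr>) \<phi> \<and> expansive (G Mod H) \<psi>
            \<longrightarrow> expansive G \<phi>)"
proof -
  interpret comm_group G
    by (rule assms(1))
  have \<psi>: "\<And>x. x \<in> carrier G \<Longrightarrow> \<psi> (H #> x) = H #> \<phi> x"
    using assms(6) by blast
  show ?thesis
  proof (intro conjI impI; elim conjE)
    assume "pos_expansive (G\<lparr>carrier := H\<rparr>) \<phi>" "pos_expansive (G Mod H) \<psi>"
    then show "pos_expansive G \<phi>"
      using pos_expansive_extension[OF assms(2-4) \<psi>] by blast
  next
    assume iso: "\<phi> \<in> iso G G" "\<phi> \<in> iso (G\<lparr>carrier := H\<rparr>) (G\<lparr>carrier := H\<rparr>)"
      and exp: "expansive (G\<lparr>carrier := H\<rparr>) \<phi>" "expansive (G Mod H) \<psi>"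
    from iso(2) have "bij_betw \<phi> H H"
      by (simp add: iso_def)
    then show "expansive G \<phi>"
      using expansive_extension[OF assms(2,3) iso(1) _ \<psi> exp] by blast
  qed
qed

end
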